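(* The map $\phi:\mathbf G\times\mathcal T\to\mathcal T$ defined, for $X=(A,\beta,B,Q_1,\dots,Q_n)\in\mathbf G$ and $\xi=(P_B,v_B,b_B,T,p_1,\dots,p_n)\in\mathcal T$, by $$\phi(X,\xi):=\Big(P_BP_A,\; v_B+R_Bv_A,\; b_B+\beta,\; P_A^{-1}TB,\; \big(P_BTB\,Q_i^{-1}\,T^{-1}P_B^{-1}(p_i)\big)_{i=1,\dots,n}\Big)$$ is a well-defined transitive right group action of $\mathbf G$ on $\mathcal T$.
   Context: Notation: $\mathrm{SE}(3)$ is the set of pairs $P=(R_P,x_P)$, $R_P\in\mathrm{SO}(3)$, $x_P\in\mathbb R^3$, product $(R_1,x_1)(R_2,x_2)=(R_1R_2,x_1+R_1x_2)$, acting on points by $P(p)=R_Pp+x_P$. $\mathrm{SE}_2(3)$ is the set of triples $A=(R_A,x_A,v_A)$, $R_A\in\mathrm{SO}(3)$, $x_A,v_A\in\mathbb R^3$, product $(R_1,x_1,v_1)(R_2,x_2,v_2)=(R_1R_2,x_1+R_1x_2,v_1+R_1v_2)$; write $P_A:=(R_A,x_A)\in\mathrm{SE}(3)$. $\mathrm{SOT}(3)$ is the group of pairs $Q=(R_Q,c_Q)$, $R_Q\in\mathrm{SO}(3)$, $c_Q>0$, product $(R_1R_2,c_1c_2)$, acting on points by $Q(p):=c_QR_Qp$ (so $Q^{-1}(p)=c_Q^{-1}R_Q^\top p$). Compositions such as $P_BTBQ_i^{-1}T^{-1}P_B^{-1}(p_i)$ mean successive application of these point actions. $\mathbf G:=\mathrm{SE}_2(3)\times\mathbb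 R^6\times\mathrm{SE}(3)\times\mathrm{SOT}(3)^n$ is the direct product group ($\mathbb R^6$ under addition), with elements $X=(A,\beta,B,Q_1,\dots,Q_n)$. State space: a state is $\xi=(P_B,v_B,b_B,T,p_1,\dots,p_n)$ with $P_B=(R_B,x_B)\in\mathrm{SE}(3)$, $v_B\in\mathbb R^3$, $b_B\in\mathbb R^6$, $T\in\mathrm{SE}(3)$, $p_i\in\mathbb R^3$; the total space $\mathcal T$ is the set of such states with $(P_BT)^{-1}(p_i)\ne0$ for all $i$. A right group action satisfies $\phi(XY,\xi)=\phi(Y,\phi(X,\xi))$, $\phi(\mathrm{id},\xi)=\xi$; transitive means every state can be mapped to every other. *)

theory Defs
  imports "HOL-Analysis.Analysis"
begin

type_synonym vec3 = "real ^ 3"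
type_synonym mat3 = "real ^ 3 ^ 3"

definition SO3 :: "mat3 set" where
  "SO3 = {R. orthogonal_matrix R \<and> det R = 1}"

type_synonym se3 = "mat3 \<times> vec3"

definition is_se3 :: "se3 \<Rightarrow> bool" where
  "is_se3 P \<longleftrightarrow> fst P \<in> SO3"

definition se3_mul :: "se3 \<Rightarrow> se3 \<Rightarrow> se3" where
  "se3_mul P1 P2 = (fst P1 ** fst P2, snd P1 + fst P1 *v snd P2)"

definition se3_id :: se3 where
  "se3_id = (mat 1, 0)"

definition se3_inv :: "se3 \<Rightarrow> se3" where
  "se3_inv P = (transpose (fst P), - (transpose (fst P) *v snd P))"

definition se3_act :: "se3 \<Rightarrow> vec3 \<Rightarrow> vec3" where
  "se3_act P p = fst P *v p + snd P"

type_synonym se23 = "mat3 \<times> vec3 \<times> vec3"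

definition is_se23 :: "se23 \<Rightarrow> bool" where
  "is_se23 A \<longleftrightarrow> fst A \<in> SO3"

definition se23_mul :: "se23 \<Rightarrow> se23 \<Rightarrow> se23" where
  "se23_mul A1 A2 = (case A1 of (R1, x1, v1) \<Rightarrow> case A2 of (R2, x2, v2) \<Rightarrow>
      (R1 ** R2, x1 + R1 *v x2, v1 + R1 *v v2))"

definition se23_id :: se23 where
  "se23_id = (mat 1, 0, 0)"

definition se23_P :: "se23 \<Rightarrow> se3" where
  "se23_P A = (case A of (R, x, v) \<Rightarrow> (R, x))"

definition se23_v :: "se23 \<Rightarrow> vec3" where
  "se23_v A = (case A of (R, x, v) \<Rightarrow> v)"

type_synonym sot3 = "mat3 \<times> real"

definition is_sot3 :: "sot3 \<Rightarrow> bool" where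
  "is_sot3 Q \<longleftrightarrow> fst Q \<in> SO3 \<and> snd Q > 0"

definition sot3_mul :: "sot3 \<Rightarrow> sot3 \<Rightarrow> sot3" where
  "sot3_mul Q1 Q2 = (fst Q1 ** fst Q2, snd Q1 * snd Q2)"

definition sot3_id :: sot3 where
  "sot3_id = (mat 1, 1)"

definition sot3_act :: "sot3 \<Rightarrow> vec3 \<Rightarrow> vec3" where
  "sot3_act Q p = snd Q *\<^sub>R (fst Q *v p)"

definition sot3_inv_act :: "sot3 \<Rightarrow> vec3 \<Rightarrow> vec3" where
  "sot3_inv_act Q p = inverse (snd Q) *\<^sub>R (transpose (fst Q) *v p)"

text \<open>Landmarks are indexed by a finite type 'n (with CARD('n) = n).\<close>

type_synonym 'n grp = "se23 \<times> (real ^ 6) \<times> se3 \<times> ('n \<Rightarrow> sot3)"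

definition in_G :: "'n::finite grp \<Rightarrow> bool" where
  "in_G X = (case X of (A, \<beta>, B, Q) \<Rightarrow>
      is_se23 A \<and> is_se3 B \<and> (\<forall>i. is_sot3 (Q i)))"

definition G_mul :: "'n::finite grp \<Rightarrow> 'n grp \<Rightarrow> 'n grp" where
  "G_mul X Y = (case X of (A1, \<beta>1, B1, Q1) \<Rightarrow> case Y of (A2, \<beta>2, B2, Q2) \<Rightarrow>
      (se23_mul A1 A2, \<beta>1 + \<beta>2, se3_mul B1 B2, (\<lambda>i. sot3_mul (Q1 i) (Q2 i))))"

definition G_id :: "'n::finite grp" where
  "G_id = (se23_id, 0, se3_id, (\<lambda>i. sot3_id))"

type_synonym 'n state = "se3 \<times> vec3 \<times> (real ^ 6) \<times> se3 \<times> ('n \<Rightarrow> vec3)"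

definition in_T :: "'n::finite state \<Rightarrow> bool" where
  "in_T \<xi> = (case \<xi> of (PB, vB, bB, T, p) \<Rightarrow>
      is_se3 PB \<and> is_se3 T \<and>
      (\<forall>i. se3_act (se3_inv (se3_mul PB T)) (p i) \<noteq> 0))"

definition phi :: "'n::finite grp \<Rightarrow> 'n state \<Rightarrow> 'n state" where
  "phi X \<xi> = (case X of (A, \<beta>, B, Q) \<Rightarrow> case \<xi> of (PB, vB, bB, T, p) \<Rightarrow>
      (se3_mul PB (se23_P A),
       vB + fst PB *v se23_v A,
       bB + \<beta>,
       se3_mul (se3_mul (se3_inv (se23_P A)) T) B,
       (\<lambda>i. se3_act PB (se3_act T (se3_act B (sot3_inv_act (Q i)
              (se3_act (se3_inv T) (se3_act (se3_inv PB) (p i)))))))))"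

end

theory Submission
  imports Defs
begin

text \<open>
  Write \<open>M = P\<^sub>B T\<close> for the pose of the sensor frame and \<open>y\<^sub>i = M\<^sup>-\<^sup>1(p\<^sub>i)\<close> for the
  landmarks in sensor coordinates; a state lies in the total space iff every \<open>y\<^sub>i\<close> is nonzero.
  Since \<open>(P\<^sub>B P\<^sub>A)(P\<^sub>A\<^sup>-\<^sup>1 T B) = M B\<close>, the action replaces \<open>M\<close> by \<open>M B\<close> and each \<open>y\<^sub>i\<close>
  by \<open>Q\<^sub>i\<^sup>-\<^sup>1(y\<^sub>i)\<close>, while \<open>(P\<^sub>B, v\<^sub>B, b\<^sub>B)\<close> is simply multiplied by \<open>(A, \<beta>)\<close> in
  \<open>SE\<^sub>2(3) \<times> \<real>\<^sup>6\<close>. In these coordinates the identity and composition laws reduce to the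
  group laws of \<open>SE(3)\<close> and \<open>SOT(3)\<close>, and the total space is preserved because
  \<open>Q\<^sub>i\<^sup>-\<^sup>1\<close> maps nonzero vectors to nonzero vectors.
  For transitivity, \<open>(A, \<beta>)\<close> moves \<open>(P\<^sub>B, v\<^sub>B, b\<^sub>B)\<close> to any target, \<open>B\<close> then moves \<open>T\<close>
  anywhere, and \<open>SOT(3)\<close> (rotations and positive scalings) acts transitively on the nonzero
  vectors of \<open>\<real>\<^sup>3\<close>.
\<close>

declare transpose_matrix_vector [simp del]

lemma matrix_vector_mult_uminus:
  fixes A :: "'a::ring_1 ^ 'n ^ 'm"
  shows "A *v (- x) = - (A *v x)"
  by (simp add: matrix_vector_mult_def vec_eq_iff sum_negf)

lemma SO3_transpose_mult: "R \<in> SO3 \<Longrightarrow> transpose R ** R = mat 1"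
  and SO3_mult_transpose: "R \<in> SO3 \<Longrightarrow> R ** transpose R = mat 1"
  by (simp_all add: SO3_def orthogonal_matrix_def)

lemma SO3_matrix_mult: "R \<in> SO3 \<Longrightarrow> S \<in> SO3 \<Longrightarrow> R ** S \<in> SO3"
  by (simp add: SO3_def orthogonal_matrix_mul det_mul)

lemma SO3_transpose: "R \<in> SO3 \<Longrightarrow> transpose R \<in> SO3"
  by (simp add: SO3_def det_transpose)

lemma SO3_transpose_mult_cancel_left: "R \<in> SO3 \<Longrightarrow> transpose R ** (R ** S) = S"
  and SO3_transpose_mult_cancel_right: "R \<in> SO3 \<Longrightarrow> R ** (transpose R ** S) = S"
  by (simp_all add: matrix_mul_assoc SO3_transpose_mult SO3_mult_transpose)

lemma SO3_transpose_cancel_left: "R \<in> SO3 \<Longrightarrow> transpose R *v (R *v x) = x"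
  and SO3_transpose_cancel_right: "R \<in> SO3 \<Longrightarrow> R *v (transpose R *v x) = x"
  by (simp_all add: matrix_vector_mul_assoc SO3_transpose_mult SO3_mult_transpose)

lemma is_se3_mul: "is_se3 P \<Longrightarrow> is_se3 Q \<Longrightarrow> is_se3 (se3_mul P Q)"
  by (simp add: is_se3_def se3_mul_def SO3_matrix_mult)

lemma is_se3_inv: "is_se3 P \<Longrightarrow> is_se3 (se3_inv P)"
  by (simp add: is_se3_def se3_inv_def SO3_transpose)

lemma se3_mul_assoc: "se3_mul (se3_mul P Q) S = se3_mul P (se3_mul Q S)"
  by (simp add: se3_mul_def matrix_mul_assoc matrix_vector_mul_assoc[symmetric] algebra_simps)

lemma se3_mul_id_left [simp]: "se3_mul se3_id P = P"
  and se3_mul_id_right [simp]: "se3_mul P se3_id = P"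
  and se3_inv_id [simp]: "se3_inv se3_id = se3_id"
  and se3_act_id [simp]: "se3_act se3_id p = p"
  by (simp_all add: se3_mul_def se3_inv_def se3_act_def se3_id_def)

lemma se3_act_mul: "se3_act (se3_mul P Q) p = se3_act P (se3_act Q p)"
  by (simp add: se3_act_def se3_mul_def matrix_vector_mul_assoc[symmetric] algebra_simps)

lemma se3_act_inv_cancel_left: "is_se3 P \<Longrightarrow> se3_act (se3_inv P) (se3_act P p) = p"
  and se3_act_inv_cancel_right: "is_se3 P \<Longrightarrow> se3_act P (se3_act (se3_inv P) p) = p"
  by (simp_all add: is_se3_def se3_act_def se3_inv_def matrix_vector_mul_assoc algebra_simps
      matrix_vector_mult_uminus SO3_transpose_mult SO3_mult_transpose)

lemma se3_inv_cancel_left: "is_se3 P \<Longrightarrow> se3_mul (se3_inv P) (se3_mul P Q) = Q"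
  and se3_inv_cancel_right: "is_se3 P \<Longrightarrow> se3_mul P (se3_mul (se3_inv P) Q) = Q"
  by (simp_all add: is_se3_def se3_mul_def se3_inv_def matrix_vector_mul_assoc algebra_simps
      matrix_vector_mult_uminus SO3_transpose_mult_cancel_left SO3_transpose_mult_cancel_right
      SO3_transpose_mult SO3_mult_transpose)

lemma se3_inv_mul: "is_se3 P \<Longrightarrow> se3_inv (se3_mul P Q) = se3_mul (se3_inv Q) (se3_inv P)"
  by (simp add: is_se3_def se3_mul_def se3_inv_def matrix_transpose_mul matrix_vector_mul_assoc
      matrix_mul_assoc[symmetric] algebra_simps matrix_vector_mult_uminus SO3_transpose_mult)

lemma sot3_inv_act_id [simp]: "sot3_inv_act sot3_id y = y"
  by (simp add: sot3_inv_act_def sot3_id_def)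

lemma sot3_inv_act_mul: "sot3_inv_act (sot3_mul Q1 Q2) y = sot3_inv_act Q2 (sot3_inv_act Q1 y)"
  by (simp add: sot3_inv_act_def sot3_mul_def matrix_transpose_mul
      matrix_vector_mul_assoc[symmetric] algebra_simps)

lemma sot3_inv_act_nonzero:
  assumes "is_sot3 Q" "y \<noteq> 0"
  shows "sot3_inv_act Q y \<noteq> 0"
proof
  assume "sot3_inv_act Q y = 0"
  then have "transpose (fst Q) *v y = 0"
    using assms(1) by (simp add: sot3_inv_act_def is_sot3_def)
  then have "y = fst Q *v 0"
    using assms(1) by (metis SO3_transpose_cancel_right is_sot3_def)
  with assms(2) show False by simp
qed

lemma sot3_inv_act_transitive:
  assumes "y \<noteq> 0" "w \<noteq> 0"
  obtains Q where "is_sot3 Q" "sot3_inv_act Q y = w"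
proof -
  define c where "c = norm y / norm w"
  have c: "c > 0" and "norm (c *\<^sub>R w) = norm y"
    using assms by (simp_all add: c_def)
  then obtain f where f: "orthogonal_transformation f" "det (matrix f) = 1" "f (c *\<^sub>R w) = y"
    using rotation_exists[of "c *\<^sub>R w" y] by auto
  define R where "R = matrix f"
  have R: "R \<in> SO3"
    using f by (simp add: SO3_def R_def orthogonal_transformation_matrix)
  have "R *v (c *\<^sub>R w) = y"
    using f by (simp add: R_def matrix_works orthogonal_transformation_linear)
  then have "transpose R *v y = c *\<^sub>R w"
    using SO3_transpose_cancel_left[OF R] by metis
  with R c have "is_sot3 (R, c)" "sot3_inv_act (R, c) y = w"
    by (simp_all add: is_sot3_def sot3_inv_act_def)
  then show thesis by (rule that)
qed

lemma is_se3_se23_P: "is_se23 A \<Longrightarrow> is_se3 (se23_P A)"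
  by (cases A) (simp add: is_se23_def is_se3_def se23_P_def)

lemma se23_P_mul: "se23_P (se23_mul A1 A2) = se3_mul (se23_P A1) (se23_P A2)"
  by (cases A1, cases A2) (simp add: se23_P_def se23_mul_def se3_mul_def)

lemma se23_v_mul: "se23_v (se23_mul A1 A2) = se23_v A1 + fst (se23_P A1) *v se23_v A2"
  by (cases A1, cases A2) (simp add: se23_P_def se23_v_def se23_mul_def)

lemma se23_P_id [simp]: "se23_P se23_id = se3_id"
  and se23_v_id [simp]: "se23_v se23_id = 0"
  by (simp_all add: se23_P_def se23_v_def se23_id_def se3_id_def)

lemma se3_mul_pose_update:
  "is_se3 PA \<Longrightarrow>
    se3_mul (se3_mul PB PA) (se3_mul (se3_mul (se3_inv PA) T) B) = se3_mul (se3_mul PB T) B"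
  by (simp add: se3_mul_assoc se3_inv_cancel_right)

lemma phi_eq:
  assumes "is_se3 PB"
  shows "phi (A, \<beta>, B, Q) (PB, vB, bB, T, p) =
    (se3_mul PB (se23_P A), vB + fst PB *v se23_v A, bB + \<beta>,
     se3_mul (se3_mul (se3_inv (se23_P A)) T) B,
     \<lambda>i. se3_act (se3_mul (se3_mul PB T) B)
           (sot3_inv_act (Q i) (se3_act (se3_inv (se3_mul PB T)) (p i))))"
  using assms by (simp add: phi_def se3_inv_mul se3_act_mul)

lemma in_T_iff:
  "in_T (PB, vB, bB, T, p) \<longleftrightarrow>
    is_se3 PB \<and> is_se3 T \<and> (\<forall>i. se3_act (se3_inv (se3_mul PB T)) (p i) \<noteq> 0)"
  by (simp add: in_T_def)

lemma in_G_iff: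
  "in_G (A, \<beta>, B, Q) \<longleftrightarrow> is_se23 A \<and> is_se3 B \<and> (\<forall>i. is_sot3 (Q i))"
  by (simp add: in_G_def)

lemma phi_in_T:
  assumes "in_G X" "in_T \<xi>"
  shows "in_T (phi X \<xi>)"
proof -
  obtain A \<beta> B Q PB vB bB T p where X: "X = (A, \<beta>, B, Q)" and \<xi>: "\<xi> = (PB, vB, bB, T, p)"
    by (cases X, cases \<xi>) auto
  have A: "is_se3 (se23_P A)" and B: "is_se3 B" and Q: "\<And>i. is_sot3 (Q i)"
    using assms(1) by (auto simp: X in_G_iff is_se3_se23_P)
  have PB: "is_se3 PB" and T: "is_se3 T"
    and p: "\<And>i. se3_act (se3_inv (se3_mul PB T)) (p i) \<noteq> 0"
    using assms(2) by (auto simp: \<xi> in_T_iff)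
  have MB: "is_se3 (se3_mul (se3_mul PB T) B)"
    using PB T B by (simp add: is_se3_mul)
  show ?thesis
    using PB A T B sot3_inv_act_nonzero[OF Q p]
    by (simp add: X \<xi> phi_eq in_T_iff se3_mul_pose_update se3_act_inv_cancel_left[OF MB]
        is_se3_mul is_se3_inv)
qed

lemma phi_G_id:
  assumes "in_T \<xi>"
  shows "phi G_id \<xi> = \<xi>"
proof -
  obtain PB vB bB T p where \<xi>: "\<xi> = (PB, vB, bB, T, p)"
    by (cases \<xi>) auto
  have "is_se3 PB" "is_se3 (se3_mul PB T)"
    using assms by (simp_all add: \<xi> in_T_iff is_se3_mul)
  then show ?thesis
    by (simp add: \<xi> G_id_def phi_eq se3_act_inv_cancel_right)
qed

lemma phi_G_mul:
  assumes "in_G X" "in_G Y" "in_T \<xi>"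
  shows "phi (G_mul X Y) \<xi> = phi Y (phi X \<xi>)"
proof -
  obtain A1 \<beta>1 B1 Q1 A2 \<beta>2 B2 Q2 where X: "X = (A1, \<beta>1, B1, Q1)" and Y: "Y = (A2, \<beta>2, B2, Q2)"
    by (cases X, cases Y) auto
  obtain PB vB bB T p where \<xi>: "\<xi> = (PB, vB, bB, T, p)"
    by (cases \<xi>) auto
  define P1 P2 where "P1 = se23_P A1" and "P2 = se23_P A2"
  define M where "M = se3_mul PB T"
  define y where "y = (\<lambda>i. se3_act (se3_inv M) (p i))"
  define T1 where "T1 = se3_mul (se3_mul (se3_inv P1) T) B1"
  have P1: "is_se3 P1" and B1: "is_se3 B1"
    using assms(1) by (auto simp: X P1_def in_G_iff is_se3_se23_P)
  have PB: "is_se3 PB" and M: "is_se3 M"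
    using assms(3) by (auto simp: \<xi> M_def in_T_iff is_se3_mul)
  have PB1: "is_se3 (se3_mul PB P1)" and MB1: "is_se3 (se3_mul M B1)"
    using PB P1 M B1 by (simp_all add: is_se3_mul)
  have pose: "se3_mul (se3_mul PB P1) T1 = se3_mul M B1"
    using P1 by (simp add: M_def T1_def se3_mul_pose_update)
  have XY: "phi (G_mul X Y) \<xi> =
    (se3_mul PB (se3_mul P1 P2), vB + fst PB *v se23_v (se23_mul A1 A2), bB + (\<beta>1 + \<beta>2),
     se3_mul (se3_mul (se3_inv (se3_mul P1 P2)) T) (se3_mul B1 B2),
     \<lambda>i. se3_act (se3_mul M (se3_mul B1 B2)) (sot3_inv_act (sot3_mul (Q1 i) (Q2 i)) (y i)))"
    using PB by (simp add: X Y \<xi> G_mul_def phi_eq se23_P_mul P1_def P2_def M_def y_def)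
  have "phi X \<xi> = (se3_mul PB P1, vB + fst PB *v se23_v A1, bB + \<beta>1, T1,
      \<lambda>i. se3_act (se3_mul M B1) (sot3_inv_act (Q1 i) (y i)))"
    using PB by (simp add: X \<xi> phi_eq P1_def M_def y_def T1_def)
  then have "phi Y (phi X \<xi>) =
    (se3_mul (se3_mul PB P1) P2, (vB + fst PB *v se23_v A1) + fst (se3_mul PB P1) *v se23_v A2,
     (bB + \<beta>1) + \<beta>2, se3_mul (se3_mul (se3_inv P2) T1) B2,
     \<lambda>i. se3_act (se3_mul (se3_mul M B1) B2) (sot3_inv_act (Q2 i) (sot3_inv_act (Q1 i) (y i))))"
    by (simp add: Y phi_eq[OF PB1] pose se3_act_inv_cancel_left[OF MB1] flip: P2_def)
  moreover have "vB + fst PB *v se23_v (se23_mul A1 A2)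
      = (vB + fst PB *v se23_v A1) + fst (se3_mul PB P1) *v se23_v A2"
    by (simp add: P1_def se23_v_mul se3_mul_def matrix_vector_mul_assoc algebra_simps)
  moreover have "se3_mul (se3_mul (se3_inv (se3_mul P1 P2)) T) (se3_mul B1 B2)
      = se3_mul (se3_mul (se3_inv P2) T1) B2"
    using P1 by (simp add: T1_def se3_inv_mul se3_mul_assoc)
  ultimately show ?thesis
    unfolding XY by (simp add: se3_mul_assoc sot3_inv_act_mul add.assoc)
qed

lemma phi_transitive:
  assumes "in_T \<xi>" "in_T \<xi>'"
  shows "\<exists>X. in_G X \<and> phi X \<xi> = \<xi>'"
proof -
  obtain PB vB bB T p where \<xi>: "\<xi> = (PB, vB, bB, T, p)"
    by (cases \<xi>) auto
  obtain PB' vB' bB' T' p' where \<xi>': "\<xi>' = (PB', vB', bB', T', p')"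
    by (cases \<xi>') auto
  define M M' where "M = se3_mul PB T" and "M' = se3_mul PB' T'"
  have PB: "is_se3 PB" and T: "is_se3 T" and p: "\<And>i. se3_act (se3_inv M) (p i) \<noteq> 0"
    using assms(1) by (auto simp: \<xi> M_def in_T_iff)
  have PB': "is_se3 PB'" and T': "is_se3 T'" and p': "\<And>i. se3_act (se3_inv M') (p' i) \<noteq> 0"
    using assms(2) by (auto simp: \<xi>' M'_def in_T_iff)
  define PA where "PA = se3_mul (se3_inv PB) PB'"
  define A where "A = (fst PA, snd PA, transpose (fst PB) *v (vB' - vB))"
  define B where "B = se3_mul (se3_inv T) (se3_mul PA T')"
  have "\<forall>i. \<exists>q. is_sot3 q \<and> sot3_inv_act q (se3_act (se3_inv M) (p i)) = se3_act (se3_inv M') (p' i)"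
    by (metis sot3_inv_act_transitive p p')
  then obtain Q where Q: "\<And>i. is_sot3 (Q i)"
    and y: "\<And>i. sot3_inv_act (Q i) (se3_act (se3_inv M) (p i)) = se3_act (se3_inv M') (p' i)"
    by metis
  have PA: "is_se3 PA" and B: "is_se3 B" and M': "is_se3 M'"
    using PB PB' T T' by (simp_all add: PA_def B_def M'_def is_se3_mul is_se3_inv)
  have "in_G (A, bB' - bB, B, Q)"
    using PA B Q by (simp add: in_G_iff A_def is_se23_def is_se3_def)
  moreover have "phi (A, bB' - bB, B, Q) \<xi> = \<xi>'"
  proof -
    have PB_PA: "se3_mul PB PA = PB'"
      using PB by (simp add: PA_def se3_inv_cancel_right)
    moreover have "se3_mul (se3_mul (se3_inv PA) T) B = T'"
      using T PA by (simp add: B_def se3_mul_assoc se3_inv_cancel_right se3_inv_cancel_left)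
    moreover have "se3_mul (se3_mul PB T) B = M'"
      using T by (simp add: B_def M'_def se3_mul_assoc se3_inv_cancel_right PB_PA
          flip: se3_mul_assoc[of PB PA T'])
    moreover have "vB + fst PB *v (transpose (fst PB) *v (vB' - vB)) = vB'"
      using PB by (simp add: is_se3_def SO3_transpose_cancel_right)
    ultimately show ?thesis
      using PB by (simp add: \<xi> \<xi>' phi_eq A_def se23_P_def se23_v_def y
          se3_act_inv_cancel_right[OF M'] flip: M_def)
  qed
  ultimately show ?thesis by blast
qed

theorem lemma2:
  shows "(\<forall>(X::'n::finite grp) \<xi>. in_G X \<and> in_T \<xi> \<longrightarrow> in_T (phi X \<xi>))
    \<and> (\<forall>\<xi>::'n state. in_T \<xi> \<longrightarrow> phi G_id \<xi> = \<xi>)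
    \<and> (\<forall>(X::'n grp) Y \<xi>. in_G X \<and> in_G Y \<and> in_T \<xi> \<longrightarrow>
          phi (G_mul X Y) \<xi> = phi Y (phi X \<xi>))
    \<and> (\<forall>\<xi> \<xi>'::'n state. in_T \<xi> \<and> in_T \<xi>' \<longrightarrow> (\<exists>X. in_G X \<and> phi X \<xi> = \<xi>'))"
  using phi_in_T phi_G_id phi_G_mul phi_transitive by blast

end
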